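(* For $\beta>0$ and every positive integer $m$, \[ \mathbb{E}\Big[\sum_{v\in V(G^n_{m,\beta})}\binom{d(v)}{2}\Big]=\left(\frac{2+5\beta}{2\beta}m^2+\frac{2-\beta}{2\beta}m\right)n+O\!\left(n^{2/(2+\beta)}\right)\qquad(n\to\infty), \] where $d(v)$ is the degree of $v$ in $G^n_{m,\beta}$.
   Context: Fix a real $\beta>0$ and a positive integer $m$. The random tree process $(G^n_{1,\beta})_{n\ge1}$ is defined as follows. $G^1_{1,\beta}$ consists of a single vertex $v_1$ and no edges. Given $G^n_{1,\beta}$ with vertices $v_1,\dots,v_n$ and directed edges $e_2,\dots,e_n$ (where $e_i$ is the edge whose tail is $v_i$), $G^{n+1}_{1,\beta}$ is obtained by adding a vertex $v_{n+1}$ and a directed edge $e_{n+1}$ with tail $v_{n+1}$ and head a "target vertex" determined by a random variable $f_{n+1}$, independent of $f_2,\dots,f_n$, taking values in $\Omega_{n+1}=\{(i,v):1\le i\le n\}\cup\{(i,h),(i,t):2\le i\le n\}$ with $\Pr(f_{n+1}=(i,v))=\beta/((2+\beta)n-2)$ and $\Pr(f_{n+1}=(i,h))=\Pr(f_{n+1}=(i,t))=1/((2+\beta)n-2)$. If $f_{n+1}=(i,v)$ the target is $v_i$ (chosen "uniformly"); if $f_{n+1}=(i,h)$ the target is the head of $e_i$, and if $f_{n+1}=(i,t)$ the target is the tail $v_i$ of $e_i$ (chosen "preferentially", by copying the head half-edge, resp. tail half-edge, of $e_i$). Consequently the target is $v_i$ with probability $(d_n(v_i)+\beta)/((2+\beta)n-2)$,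 where $d_n(v)$ is the degree of $v$ in $G^n_{1,\beta}$. Each edge is regarded as two half-edges, one at each endpoint; the degree of a vertex is the number of half-edges at it (loops count twice). For $n\ge1$, $G^n_{m,\beta}$ is the undirected multigraph obtained from $G^{nm}_{1,\beta}$ by identifying, for each $j=1,\dots,n$, the vertices $v_{(j-1)m+1},\dots,v_{jm}$ into a single vertex $w_j$, keeping all edges (so loops and multiple edges may occur). Thus $\sum_v\binom{d(v)}{2}$ equals the number of unordered pairs of distinct half-edges with a common endpoint. *)

theory Defs
  imports "HOL-Probability.Probability" "HOL-Library.Landau_Symbols"
begin

text \<open>A state of the tree process G^n_{1,beta} is the list hs of heads:
  hs ! (k-2) is the (1-based) index of the head of edge e_k, for k = 2..n,
  so length hs = n - 1.  The tail of e_k is v_k.\<close>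

text \<open>One step n -> n+1, with f_{n+1} sampled literally: with probability
  beta*n/((2+beta)n-2) an element (i,v) (uniform over i in 1..n), otherwise
  a uniform element (i,h)/(i,t) with i in 2..n; each element of Omega_{n+1}
  thus gets the prescribed probability.\<close>
definition tree_step :: "real \<Rightarrow> nat list \<Rightarrow> nat list pmf" where
  "tree_step \<beta> hs =
     (let n = length hs + 1 in
      do { b \<leftarrow> bernoulli_pmf (\<beta> * real n / ((2 + \<beta>) * real n - 2));
           t \<leftarrow> (if b then pmf_of_set {1..n}
                 else do { i \<leftarrow> pmf_of_set {2..n};
                           h \<leftarrow> pmf_of_set {True, False};
                           return_pmf (if h then hs ! (i - 2) else i) });
           return_pmf (hs @ [t]) })"

definition tree_process :: "real \<Rightarrow> nat \<Rightarrow> nat list pmf" where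
  "tree_process \<beta> N = ((\<lambda>p. bind_pmf p (tree_step \<beta>)) ^^ (N - 1)) (return_pmf [])"

text \<open>Vertex v_k of G^{nm}_{1,beta} is merged into w_{block m k}.\<close>
definition block :: "nat \<Rightarrow> nat \<Rightarrow> nat" where
  "block m k = (k - 1) div m + 1"

definition merged_degree :: "nat \<Rightarrow> nat list \<Rightarrow> nat \<Rightarrow> nat" where
  "merged_degree m hs j =
     card {k \<in> {2..length hs + 1}. block m k = j}
   + card {k \<in> {2..length hs + 1}. block m (hs ! (k - 2)) = j}"

definition cherries :: "nat \<Rightarrow> nat \<Rightarrow> nat list \<Rightarrow> real" where
  "cherries m n hs = real (\<Sum>j = 1..n. merged_degree m hs j choose 2)"

end

theory Submission
  imports Defs
begin

(* Encode G^N_{1,beta} (N = nm) by its head list hs, and let D_j be the degree of the merged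
   vertex w_j.  With Q = sum_j D_j^2, which equals the sum of D_{block x} over the endpoints x
   of all half-edges, and sum_j D_j = 2(N - 1), the number of cherries is (Q - 2(N - 1))/2.

   1. One step of the process averages a function of the new target as
      (beta * sum_{i<=N} g i + sum_{x endpoint} g x) / Z_N   with   Z_N = (2 + beta) N - 2.
   2. Hence X_N = E Q satisfies an exact linear recursion X_{N+1} = (1 + 2/Z_N) X_N + ...,
      whose inhomogeneity involves J_N, the expected number of heads in the block of the
      next vertex; a head lands there only if it was copied late, so J_N = O(1/N).
   3. With alpha = ((2 + beta)(m + 1) + 4 beta m)/beta and r = N mod m, the defect
      Y_N = X_N - alpha N - (r^2 - m r) satisfies |Y_{N+1} - (1 + 2/Z_N) Y_N| <= K/N.
   4. A discrete Groenwall argument, with prod_{k<N} (1 + 2/Z_k) a ratio of Gamma-type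
      products of order N^(2/(2+beta)), gives Y_N = O(N^(2/(2+beta))).
   5. Finally E[cherries] = (X_{nm} - 2(nm - 1))/2, which is the claimed linear term plus
      (Y_{nm} + 2)/2.
   The file follows these steps after some generalities on finite expectations: the
   one-step dynamics and support of the process, block degrees and the cherry count, the
   recursion for X_N, the bound on J_N, the growth factor with the Groenwall lemma, the
   defect recursion, and the theorem. *)

lemma expectation_bind_finite:
  fixes h :: "'b \<Rightarrow> real"
  assumes "finite (set_pmf p)" "\<And>x. x \<in> set_pmf p \<Longrightarrow> finite (set_pmf (f x))"
  shows "measure_pmf.expectation (p \<bind> f) h
       = measure_pmf.expectation p (\<lambda>x. measure_pmf.expectation (f x) h)"
proof -
  have "measure_pmf.expectation (p \<bind> f) h
      = (\<Sum>a\<in>set_pmf p. pmf p a *\<^sub>R measure_pmf.expectation (f a) h)"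
    using assms by (intro pmf_expectation_bind) auto
  also have "\<dots> = measure_pmf.expectation p (\<lambda>x. measure_pmf.expectation (f x) h)"
    using assms by (subst integral_measure_pmf[of "set_pmf p"]) auto
  finally show ?thesis .
qed

lemma expectation_cong:
  fixes f g :: "'a \<Rightarrow> real"
  shows "(\<And>x. x \<in> set_pmf p \<Longrightarrow> f x = g x)
     \<Longrightarrow> measure_pmf.expectation p f = measure_pmf.expectation p g"
  by (rule integral_cong_AE) (auto simp: AE_measure_pmf_iff)

lemma expectation_const: "measure_pmf.expectation p (\<lambda>_. c) = (c::real)"
  by (simp add: lebesgue_integral_const measure_pmf.prob_space)

lemma expectation_linear:
  fixes f g :: "'a \<Rightarrow> real"
  assumes "finite (set_pmf p)"
  shows "measure_pmf.expectation p (\<lambda>x. f x * a + g x * b + c)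
       = measure_pmf.expectation p f * a + measure_pmf.expectation p g * b + c"
proof -
  have "integrable (measure_pmf p) h" for h :: "'a \<Rightarrow> real"
    using assms by (rule integrable_measure_pmf_finite)
  then show ?thesis by simp
qed

lemma expectation_sum:
  fixes f :: "nat \<Rightarrow> 'a \<Rightarrow> real"
  assumes "finite (set_pmf p)"
  shows "measure_pmf.expectation p (\<lambda>x. \<Sum>k\<in>K. c k * f k x)
       = (\<Sum>k\<in>K. c k * measure_pmf.expectation p (f k))"
  by (subst Bochner_Integration.integral_sum)
     (use assms in \<open>auto simp: integrable_measure_pmf_finite\<close>)

lemma expectation_mono:
  fixes f g :: "'a \<Rightarrow> real"
  assumes "finite (set_pmf p)" "\<And>x. x \<in> set_pmf p \<Longrightarrow> f x \<le> g x"
  shows "measure_pmf.expectation p f \<le> measure_pmf.expectation p g"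
  by (rule integral_mono_AE)
     (use assms in \<open>auto simp: AE_measure_pmf_iff integrable_measure_pmf_finite\<close>)

lemma expectation_nonneg:
  fixes f :: "'a \<Rightarrow> real"
  assumes "\<And>x. x \<in> set_pmf p \<Longrightarrow> 0 \<le> f x"
  shows "0 \<le> measure_pmf.expectation p f"
  by (rule integral_nonneg_AE) (use assms in \<open>auto simp: AE_measure_pmf_iff\<close>)

lemma sum_of_bool_card:
  assumes "finite A"
  shows "(\<Sum>i\<in>A. of_bool (P i) :: real) = real (card {i \<in> A. P i})"
proof -
  have "A \<inter> Collect P = {i \<in> A. P i}" by auto
  then show ?thesis using assms by (simp add: of_bool_def sum.If_cases)
qed

lemma sum_of_bool_le_card:
  assumes "{i \<in> A. P i} \<subseteq> S" "finite S" "finite A"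
  shows "(\<Sum>i\<in>A. of_bool (P i) :: real) \<le> real (card S)"
proof -
  have "(\<Sum>i\<in>A. of_bool (P i) :: real) = real (card {i \<in> A. P i})"
    using assms(3) by (rule sum_of_bool_card)
  also have "\<dots> \<le> real (card S)" using assms by (simp add: card_mono)
  finally show ?thesis .
qed

lemma sum_list_sum_swap:
  fixes f :: "'a \<Rightarrow> 'b \<Rightarrow> real"
  shows "(\<Sum>x\<leftarrow>xs. \<Sum>i\<in>A. f x i) = (\<Sum>i\<in>A. \<Sum>x\<leftarrow>xs. f x i)"
  by (induction xs) (simp_all add: sum.distrib)

lemma sum_list_cong_set:
  fixes f g :: "'a \<Rightarrow> real"
  shows "(\<And>y. y \<in> set xs \<Longrightarrow> f y = g y) \<Longrightarrow> (\<Sum>y\<leftarrow>xs. f y) = (\<Sum>y\<leftarrow>xs. g y)"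
  by (intro arg_cong[where f=sum_list] map_cong) auto

(* Vertices are 1..N; the endpoints of the N - 1
   edges, listed as the tails 2..N followed by the heads, are the targets of preferential
   attachment, and Z_N below is the total attachment weight sum_v (d(v) + beta). *)

definition endpoints :: "nat list \<Rightarrow> nat list" where
  "endpoints hs = [2..<length hs + 2] @ hs"

definition total_weight :: "real \<Rightarrow> nat \<Rightarrow> real" where
  "total_weight \<beta> N = (2 + \<beta>) * real N - 2"

lemma total_weight_pos:
  assumes "\<beta> > 0" "N \<ge> 1"
  shows "total_weight \<beta> N > 0"
proof -
  have "2 + \<beta> \<le> (2 + \<beta>) * real N" using assms mult_left_mono[of 1 "real N" "2 + \<beta>"] by simp
  then show ?thesis unfolding total_weight_def using assms by linarith
qed

lemma length_endpoints: "length (endpoints hs) = 2 * length hs"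
  unfolding endpoints_def length_append length_upt by simp

lemma sum_endpoints_snoc:
  fixes f :: "nat \<Rightarrow> real"
  shows "(\<Sum>x\<leftarrow>endpoints (hs @ [t]). f x) = (\<Sum>x\<leftarrow>endpoints hs. f x) + f (length hs + 2) + f t"
proof -
  have "[2..<length (hs @ [t]) + 2] = [2..<length hs + 2] @ [length hs + 2]" by simp
  then show ?thesis unfolding endpoints_def by (simp del: upt_Suc add: ac_simps)
qed

lemma sum_heads_reindex:
  "(\<Sum>i\<in>{2..length hs + 1}. f (hs ! (i - 2))) = (\<Sum>x\<leftarrow>hs. f x)"
proof -
  have "{2..length hs + 1} = (\<lambda>k. k + 2) ` {..<length hs}"
  proof (intro equalityI subsetI)
    fix x assume "x \<in> {2..length hs + 1}"
    then show "x \<in> (\<lambda>k. k + 2) ` {..<length hs}" by (intro image_eqI[of _ _ "x - 2"]) auto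
  qed auto
  moreover have "inj_on (\<lambda>k::nat. k + 2) {..<length hs}" by (simp add: inj_on_def)
  ultimately show ?thesis
    by (simp add: sum.reindex sum_list_sum_nth atLeast0LessThan)
qed

lemma sum_tails_eq:
  "(\<Sum>i=2..length hs + 1. f i) = (\<Sum>x\<leftarrow>[2..<length hs + 2]. f x)"
  unfolding interv_sum_list_conv_sum_set_nat set_upt by (rule sum.cong) auto

(* The preferential branch: a uniform edge, then a uniform one of its two endpoints, is a
   uniform element of the endpoint list. *)
lemma expectation_copy_half_edge:
  fixes f :: "nat \<Rightarrow> real"
  assumes "hs \<noteq> []"
  shows "measure_pmf.expectation
           (pmf_of_set {2..length hs + 1} \<bind> (\<lambda>i. pmf_of_set {True, False} \<bind>
              (\<lambda>h. return_pmf (if h then hs ! (i - 2) else i)))) f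
       = (\<Sum>x\<leftarrow>endpoints hs. f x) / (2 * real (length hs))"
proof -
  have ne: "{2..length hs + 1} \<noteq> {}" using assms by (cases hs) auto
  have "measure_pmf.expectation
           (pmf_of_set {2..length hs + 1} \<bind> (\<lambda>i. pmf_of_set {True, False} \<bind>
              (\<lambda>h. return_pmf (if h then hs ! (i - 2) else i)))) f
      = measure_pmf.expectation (pmf_of_set {2..length hs + 1}) (\<lambda>i. (f (hs ! (i - 2)) + f i) / 2)"
    using ne by (subst expectation_bind_finite) (auto intro!: expectation_cong
        simp: expectation_bind_finite integral_pmf_of_set)
  also have "\<dots> = (\<Sum>i=2..length hs + 1. (f (hs ! (i - 2)) + f i) / 2) / real (length hs)"
    using assms by (subst integral_pmf_of_set) (auto simp: Suc_le_eq)
  also have "(\<Sum>i=2..length hs + 1. (f (hs ! (i - 2)) + f i) / 2)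
      = ((\<Sum>x\<leftarrow>hs. f x) + (\<Sum>x\<leftarrow>[2..<length hs + 2]. f x)) / 2"
    unfolding sum_divide_distrib[symmetric] sum.distrib sum_heads_reindex sum_tails_eq ..
  also have "\<dots> / real (length hs) = (\<Sum>x\<leftarrow>endpoints hs. f x) / (2 * real (length hs))"
    unfolding endpoints_def by (simp add: add.commute)
  finally show ?thesis .
qed

lemma tree_step_Nil:
  assumes "\<beta> > 0"
  shows "tree_step \<beta> [] = return_pmf [1]"
proof -
  have "\<beta> * real (1::nat) / ((2 + \<beta>) * real (1::nat) - 2) = 1" using assms by simp
  moreover have "bernoulli_pmf 1 = return_pmf True"
    by (rule pmf_eqI) (auto simp: pmf_bernoulli_True split: split_indicator)
  ultimately show ?thesis
    unfolding tree_step_def Let_def list.size add_0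
    by (simp only: bind_return_pmf if_True atLeastAtMost_singleton pmf_of_set_singleton
        append_Nil)
qed

lemma expectation_tree_step_mixture:
  fixes g :: "nat list \<Rightarrow> real"
  assumes b: "\<beta> > 0" and ne: "hs \<noteq> []"
  defines "N \<equiv> length hs + 1"
  defines "p \<equiv> \<beta> * real N / total_weight \<beta> N"
  shows "measure_pmf.expectation (tree_step \<beta> hs) g
       = p * ((\<Sum>i=1..N. g (hs @ [i])) / real N)
         + (1 - p) * ((\<Sum>x\<leftarrow>endpoints hs. g (hs @ [x])) / (2 * real (length hs)))"
proof -
  define copy where "copy = pmf_of_set {2..N} \<bind> (\<lambda>i. pmf_of_set {True, False} \<bind>
                              (\<lambda>h. return_pmf (if h then hs ! (i - 2) else i)))"
  have N2: "N \<ge> 2" using ne unfolding N_def by (cases hs) auto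
  have "total_weight \<beta> N > 0" using total_weight_pos[OF b] N2 by simp
  then have p01: "0 \<le> p" "p \<le> 1"
    using b N2 unfolding p_def total_weight_def by (auto simp: field_simps)
  have step: "tree_step \<beta> hs = bernoulli_pmf p \<bind>
      (\<lambda>b. (if b then pmf_of_set {1..N} else copy) \<bind> (\<lambda>t. return_pmf (hs @ [t])))"
    unfolding tree_step_def Let_def p_def total_weight_def N_def copy_def ..
  have fin: "finite (set_pmf (if b then pmf_of_set {1..N} else copy))" for b
    using N2 unfolding copy_def by auto
  have target: "measure_pmf.expectation
        ((if b then pmf_of_set {1..N} else copy) \<bind> (\<lambda>t. return_pmf (hs @ [t]))) g
      = measure_pmf.expectation (if b then pmf_of_set {1..N} else copy) (\<lambda>t. g (hs @ [t]))" for b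
    by (simp add: expectation_bind_finite fin)
  have uniform: "measure_pmf.expectation (pmf_of_set {1..N}) (\<lambda>t. g (hs @ [t]))
      = (\<Sum>i=1..N. g (hs @ [i])) / real N"
    using N2 by (subst integral_pmf_of_set) auto
  have copied: "measure_pmf.expectation copy (\<lambda>t. g (hs @ [t]))
      = (\<Sum>x\<leftarrow>endpoints hs. g (hs @ [x])) / (2 * real (length hs))"
    unfolding copy_def N_def by (rule expectation_copy_half_edge[OF ne])
  show ?thesis unfolding step using p01
    by (subst expectation_bind_finite) (auto simp: target uniform[simplified] copied fin mult.commute)
qed

(* The two branches combine into the weights (d(i) + beta)/Z_N. *)
lemma attachment_weights:
  fixes \<beta> L U C :: real
  assumes "\<beta> > 0" "L > 0"
  defines "Z \<equiv> (2 + \<beta>) * (L + 1) - 2"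
  defines "p \<equiv> \<beta> * (L + 1) / Z"
  shows "p * (U / (L + 1)) + (1 - p) * (C / (2 * L)) = (\<beta> * U + C) / Z"
proof -
  have Z: "Z = \<beta> * (L + 1) + 2 * L" unfolding Z_def by (simp add: algebra_simps)
  have "\<beta> * (L + 1) > 0" using assms by simp
  then have "Z > 0" unfolding Z using assms by linarith
  then have "1 - p = 2 * L / Z" unfolding p_def Z by (simp add: field_simps)
  moreover have "p * (U / (L + 1)) = \<beta> * U / Z" using assms unfolding p_def by simp
  ultimately show ?thesis using assms by (simp add: add_divide_distrib)
qed

(* The basic averaging identity: the new vertex is joined to i with probability
   (d(i) + beta)/Z_N. *)
theorem expectation_tree_step:
  fixes g :: "nat list \<Rightarrow> real"
  assumes b: "\<beta> > 0"
  shows "measure_pmf.expectation (tree_step \<beta> hs) g =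
     (\<beta> * (\<Sum>i=1..length hs + 1. g (hs @ [i])) + (\<Sum>x\<leftarrow>endpoints hs. g (hs @ [x])))
       / total_weight \<beta> (length hs + 1)"
proof (cases "hs = []")
  case True
  then show ?thesis using b by (simp add: tree_step_Nil endpoints_def total_weight_def)
next
  case False
  then have "real (length hs) > 0" by simp
  from attachment_weights[OF b this, of "\<Sum>i=1..length hs + 1. g (hs @ [i])"
      "\<Sum>x\<leftarrow>endpoints hs. g (hs @ [x])"]
  show ?thesis unfolding expectation_tree_step_mixture[OF b False] total_weight_def
    by (simp add: add.commute)
qed

(* Every state of the process is a list of valid heads: the head of e_k is a vertex older
   than v_k.  This bounds the support, which makes all expectations finite sums. *)

definition valid_heads :: "nat list \<Rightarrow> bool" where
  "valid_heads hs \<longleftrightarrow> (\<forall>k<length hs. 1 \<le> hs ! k \<and> hs ! k \<le> k + 1)"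

lemma valid_heads_snoc:
  "valid_heads hs \<Longrightarrow> t \<in> {1..length hs + 1} \<Longrightarrow> valid_heads (hs @ [t])"
  unfolding valid_heads_def by (auto simp: nth_append)

lemma endpoints_range:
  "valid_heads hs \<Longrightarrow> y \<in> set (endpoints hs) \<Longrightarrow> 1 \<le> y \<and> y \<le> length hs + 1"
  unfolding endpoints_def valid_heads_def by (fastforce simp: in_set_conv_nth)

lemma set_pmf_tree_step:
  assumes b: "\<beta> > 0" and valid: "valid_heads hs"
  shows "set_pmf (tree_step \<beta> hs) \<subseteq> (\<lambda>t. hs @ [t]) ` {1..length hs + 1}"
proof (cases "hs = []")
  case True
  then show ?thesis using b by (simp add: tree_step_Nil)
next
  case False
  then have N2: "length hs + 1 \<ge> 2" by (cases hs) auto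
  define target where "target b = (if b then pmf_of_set {1..length hs + 1}
      else pmf_of_set {2..length hs + 1} \<bind> (\<lambda>i. pmf_of_set {True, False} \<bind>
        (\<lambda>h. return_pmf (if h then hs ! (i - 2) else i))))" for b
  have step: "tree_step \<beta> hs = bernoulli_pmf (\<beta> * real (length hs + 1) / ((2 + \<beta>) * real (length hs + 1) - 2))
      \<bind> (\<lambda>b. target b \<bind> (\<lambda>t. return_pmf (hs @ [t])))"
    unfolding tree_step_def Let_def target_def ..
  have "t \<in> {1..length hs + 1}" if t: "t \<in> set_pmf (target b)" for b t
  proof (cases b)
    case False
    then obtain i where i: "i \<in> {2..length hs + 1}" and "t = hs ! (i - 2) \<or> t = i"
      using t N2 unfolding target_def by (auto split: if_splits)
    moreover have "1 \<le> hs ! (i - 2)" "hs ! (i - 2) \<le> i - 2 + 1"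
      using valid i unfolding valid_heads_def by auto
    ultimately show ?thesis using i by auto
  qed (use t in \<open>auto simp: target_def\<close>)
  then show ?thesis unfolding step by auto
qed

lemma tree_process_1: "tree_process \<beta> 1 = return_pmf []"
  by (simp add: tree_process_def)

lemma tree_process_Suc:
  "N \<ge> 1 \<Longrightarrow> tree_process \<beta> (Suc N) = tree_process \<beta> N \<bind> tree_step \<beta>"
  unfolding tree_process_def by (cases N) auto

lemma set_pmf_tree_process:
  assumes b: "\<beta> > 0" and N: "N \<ge> 1"
  shows "set_pmf (tree_process \<beta> N) \<subseteq> {hs. length hs = N - 1 \<and> valid_heads hs}"
  using N
proof (induction N rule: dec_induct)
  case base
  then show ?case by (simp add: tree_process_1[unfolded One_nat_def] valid_heads_def)
next
  case (step n)
  show ?case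
  proof
    fix x assume "x \<in> set_pmf (tree_process \<beta> (Suc n))"
    then obtain hs where hs: "hs \<in> set_pmf (tree_process \<beta> n)" and x: "x \<in> set_pmf (tree_step \<beta> hs)"
      using step tree_process_Suc[of n \<beta>] by auto
    have "length hs = n - 1" "valid_heads hs" using hs step by auto
    with set_pmf_tree_step[OF b] x step(1) show "x \<in> {hs. length hs = Suc n - 1 \<and> valid_heads hs}"
      by (force intro: valid_heads_snoc)
  qed
qed

lemma finite_tree_process:
  assumes b: "\<beta> > 0" and N: "N \<ge> 1"
  shows "finite (set_pmf (tree_process \<beta> N))"
proof (rule finite_subset)
  show "set_pmf (tree_process \<beta> N) \<subseteq> {xs. set xs \<subseteq> {0..N} \<and> length xs = N - 1}"
  proof
    fix xs assume "xs \<in> set_pmf (tree_process \<beta> N)"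
    then have l: "length xs = N - 1" and valid: "valid_heads xs"
      using set_pmf_tree_process[OF b N] by auto
    have "xs ! k \<le> N" if "k < length xs" for k
      using valid that l unfolding valid_heads_def by fastforce
    then show "xs \<in> {xs. set xs \<subseteq> {0..N} \<and> length xs = N - 1}"
      using l by (auto simp: in_set_conv_nth)
  qed
  show "finite {xs. set xs \<subseteq> {0..N} \<and> length xs = N - 1}"
    by (rule finite_lists_length_eq) simp
qed

lemma expectation_tree_process_Suc:
  fixes f :: "nat list \<Rightarrow> real"
  assumes b: "\<beta> > 0" and N: "N \<ge> 1"
  shows "measure_pmf.expectation (tree_process \<beta> (Suc N)) f =
         measure_pmf.expectation (tree_process \<beta> N)
           (\<lambda>hs. measure_pmf.expectation (tree_step \<beta> hs) f)"
proof -
  have "finite (set_pmf (tree_step \<beta> hs))" if "hs \<in> set_pmf (tree_process \<beta> N)" for hs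
  proof -
    have "valid_heads hs" using that set_pmf_tree_process[OF b N] by auto
    then show ?thesis using set_pmf_tree_step[OF b] finite_subset by blast
  qed
  then show ?thesis unfolding tree_process_Suc[OF N]
    by (intro expectation_bind_finite finite_tree_process[OF b N])
qed

(* The process is consistent: G^N is the prefix of G^{N+M}, so statistics of the first
   N - 1 edges have the same expectation at every later time. *)
lemma expectation_tree_process_prefix:
  fixes g :: "nat list \<Rightarrow> real"
  assumes b: "\<beta> > 0" and N: "N \<ge> 1"
  shows "measure_pmf.expectation (tree_process \<beta> (N + M)) (\<lambda>hs. g (take (N - 1) hs))
       = measure_pmf.expectation (tree_process \<beta> N) g"
proof (induction M)
  case 0
  show ?case unfolding add_0_right
    by (rule expectation_cong) (use set_pmf_tree_process[OF b N] in auto)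
next
  case (Suc M)
  have step: "measure_pmf.expectation (tree_step \<beta> hs) (\<lambda>hs. g (take (N - 1) hs))
      = g (take (N - 1) hs)" if "hs \<in> set_pmf (tree_process \<beta> (N + M))" for hs
  proof -
    have "length hs = N + M - 1" using that set_pmf_tree_process[OF b, of "N + M"] N by auto
    then have prefix: "take (N - 1) (hs @ [t]) = take (N - 1) hs" for t by simp
    have "measure_pmf.expectation (tree_step \<beta> hs) (\<lambda>hs. g (take (N - 1) hs))
        = measure_pmf.expectation (tree_step \<beta> hs) (\<lambda>_. g (take (N - 1) hs))"
      by (simp only: expectation_tree_step[OF b] prefix)
    then show ?thesis by (simp add: expectation_const)
  qed
  have "measure_pmf.expectation (tree_process \<beta> (N + Suc M)) (\<lambda>hs. g (take (N - 1) hs))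
      = measure_pmf.expectation (tree_process \<beta> (N + M))
          (\<lambda>hs. measure_pmf.expectation (tree_step \<beta> hs) (\<lambda>hs. g (take (N - 1) hs)))"
    using expectation_tree_process_Suc[OF b, of "N + M"] N by simp
  also have "\<dots> = measure_pmf.expectation (tree_process \<beta> (N + M)) (\<lambda>hs. g (take (N - 1) hs))"
    by (rule expectation_cong) (rule step)
  finally show ?case using Suc by simp
qed

(* Degrees in the merged graph.  block_deg m hs j is the degree of w_j, i.e. the number of
   half-edge endpoints in block j; sq_deg_sum m hs = sum_j D_j^2, written as a sum over
   endpoints so that it updates simply when an edge is added. *)

definition block_deg :: "nat \<Rightarrow> nat list \<Rightarrow> nat \<Rightarrow> real" where
  "block_deg m hs j = (\<Sum>y\<leftarrow>endpoints hs. of_bool (block m y = j))"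

definition sq_deg_sum :: "nat \<Rightarrow> nat list \<Rightarrow> real" where
  "sq_deg_sum m hs = (\<Sum>x\<leftarrow>endpoints hs. block_deg m hs (block m x))"

lemma block_deg_snoc:
  "block_deg m (hs @ [t]) j
     = block_deg m hs j + of_bool (block m (length hs + 2) = j) + of_bool (block m t = j)"
  unfolding block_deg_def sum_endpoints_snoc ..

lemma sum_endpoints_same_block:
  "(\<Sum>x\<leftarrow>endpoints hs. of_bool (block m u = block m x) :: real) = block_deg m hs (block m u)"
  unfolding block_deg_def by (intro arg_cong[where f=sum_list] map_cong) auto

(* Adding the edge from v_{N+1} to t raises D_{block t} and D_{block (N+1)} by one each. *)
lemma sq_deg_sum_snoc:
  "sq_deg_sum m (hs @ [t]) = sq_deg_sum m hs + 2 * block_deg m hs (block m (length hs + 2))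
      + 2 * block_deg m hs (block m t) + 2 + 2 * of_bool (block m t = block m (length hs + 2))"
proof -
  define u where "u = length hs + 2"
  have "sq_deg_sum m (hs @ [t]) = (\<Sum>x\<leftarrow>endpoints hs. block_deg m (hs @ [t]) (block m x))
      + block_deg m (hs @ [t]) (block m u) + block_deg m (hs @ [t]) (block m t)"
    unfolding sq_deg_sum_def sum_endpoints_snoc u_def ..
  also have "(\<Sum>x\<leftarrow>endpoints hs. block_deg m (hs @ [t]) (block m x))
     = sq_deg_sum m hs + (\<Sum>x\<leftarrow>endpoints hs. of_bool (block m u = block m x))
       + (\<Sum>x\<leftarrow>endpoints hs. of_bool (block m t = block m x))"
    unfolding block_deg_snoc sq_deg_sum_def u_def[symmetric] by (simp add: sum_list_addf)
  also have "block_deg m (hs @ [t]) (block m u)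
      = block_deg m hs (block m u) + 1 + of_bool (block m t = block m u)"
    unfolding block_deg_snoc u_def by simp
  also have "block_deg m (hs @ [t]) (block m t)
      = block_deg m hs (block m t) + of_bool (block m u = block m t) + 1"
    unfolding block_deg_snoc u_def by simp
  finally show ?thesis
    unfolding sum_endpoints_same_block u_def[symmetric] by (simp add: eq_commute[of "block m u"])
qed

lemma block_iff:
  assumes "m > 0" "i \<ge> 1" "j \<ge> 1"
  shows "block m i = j \<longleftrightarrow> (j - 1) * m < i \<and> i \<le> j * m"
proof -
  have "block m i = j \<longleftrightarrow> (i - 1) div m = j - 1" unfolding block_def using assms by auto
  also have "\<dots> \<longleftrightarrow> j - 1 \<le> (i - 1) div m \<and> (i - 1) div m < j"
    using assms by auto
  also have "\<dots> \<longleftrightarrow> (j - 1) * m \<le> i - 1 \<and> i - 1 < j * m"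
    using assms by (simp add: less_eq_div_iff_mult_less_eq div_less_iff_less_mult)
  also have "\<dots> \<longleftrightarrow> (j - 1) * m < i \<and> i \<le> j * m" using assms by auto
  finally show ?thesis .
qed

lemma block_ge1: "block m i \<ge> 1"
  unfolding block_def by simp

lemma block_le:
  assumes "m > 0" "1 \<le> x" "x \<le> n * m"
  shows "block m x \<le> n"
proof -
  have "(x - 1) div m < n" using assms by (intro less_mult_imp_div_less) simp
  then show ?thesis unfolding block_def by simp
qed

lemma card_block_vertices:
  assumes m: "m > 0" and y: "1 \<le> y" "y \<le> N"
  shows "card {i \<in> {1..N}. block m i = block m y}
       = (if block m y = block m (N + 1) then N mod m else m)"
proof -
  define j where "j = block m y"
  have j1: "j \<ge> 1" unfolding j_def by (rule block_ge1)
  have S: "{i \<in> {1..N}. block m i = j} = {(j - 1) * m + 1 .. min N (j * m)}"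
  proof (intro set_eqI)
    fix i
    show "i \<in> {i \<in> {1..N}. block m i = j} \<longleftrightarrow> i \<in> {(j - 1) * m + 1 .. min N (j * m)}"
      by (cases "i \<ge> 1") (use block_iff[OF m _ j1] in auto)
  qed
  have yj: "(j - 1) * m < y" "y \<le> j * m" using block_iff[OF m y(1) j1] j_def by auto
  have BN: "block m (N + 1) = N div m + 1" unfolding block_def by simp
  show ?thesis
  proof (cases "j * m \<le> N")
    case True
    have "j * m = (j - 1) * m + m" using j1 by (cases j) auto
    then have "card {i \<in> {1..N}. block m i = j} = m" unfolding S using True by simp
    moreover have "N div m \<ge> j" using True m by (simp add: less_eq_div_iff_mult_less_eq)
    ultimately show ?thesis unfolding j_def[symmetric] BN by auto
  next
    case False
    have "N div m < j" using False m by (simp add: div_less_iff_less_mult)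
    moreover have "j - 1 \<le> N div m" using yj y m by (simp add: less_eq_div_iff_mult_less_eq)
    ultimately have jd: "j = N div m + 1" by auto
    have "card {i \<in> {1..N}. block m i = j} = N - (N div m) * m" unfolding S using False jd by simp
    also have "\<dots> = N mod m" by (simp add: minus_div_mult_eq_mod)
    finally show ?thesis unfolding j_def[symmetric] BN using jd by auto
  qed
qed

lemma count_block_vertices:
  assumes m: "m > 0" and y: "1 \<le> y" "y \<le> N"
  shows "(\<Sum>i=1..N. of_bool (block m i = block m y) :: real)
       = real m - (real m - real (N mod m)) * of_bool (block m y = block m (N + 1))"
proof -
  have "(\<Sum>i=1..N. of_bool (block m i = block m y) :: real)
      = real (card {i \<in> {1..N}. block m i = block m y})"
    by (rule sum_of_bool_card) simp
  then show ?thesis using card_block_vertices[OF assms] by simp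
qed

lemma count_next_block_vertices:
  assumes m: "m > 0"
  shows "(\<Sum>i=1..N. of_bool (block m i = block m (N + 1)) :: real) = real (N mod m)"
proof (cases "N mod m = 0")
  case True
  have "block m i \<noteq> block m (N + 1)" if "i \<in> {1..N}" for i
  proof -
    have "N = (N div m) * m" using True by (metis add_0 mod_div_mult_eq)
    then have "(i - 1) div m < N div m" using that by (intro less_mult_imp_div_less) auto
    then show ?thesis unfolding block_def by simp
  qed
  then show ?thesis using True by simp
next
  case False
  then have "N \<ge> 1" by (cases N) auto
  have same: "block m (N + 1) = block m N" using False unfolding block_def
    by (metis Suc_eq_plus1 \<open>1 \<le> N\<close> add_diff_cancel_right' div_Suc le_add_diff_inverse2)
  have "(\<Sum>i=1..N. of_bool (block m i = block m (N + 1)) :: real)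
      = real (card {i \<in> {1..N}. block m i = block m N})"
    unfolding same by (rule sum_of_bool_card) simp
  then show ?thesis using card_block_vertices[OF m \<open>1 \<le> N\<close> order_refl] same by simp
qed

lemma merged_degree_eq_block_deg: "real (merged_degree m hs j) = block_deg m hs j"
proof -
  have tails: "real (card {k \<in> {2..length hs + 1}. block m k = j})
      = (\<Sum>y\<leftarrow>[2..<length hs + 2]. of_bool (block m y = j))"
    by (subst sum_of_bool_card[symmetric]) (simp_all only: finite_atLeastAtMost sum_tails_eq)
  have heads: "real (card {k \<in> {2..length hs + 1}. block m (hs ! (k - 2)) = j})
      = (\<Sum>x\<leftarrow>hs. of_bool (block m x = j))"
    by (subst sum_of_bool_card[symmetric]) (simp_all only: finite_atLeastAtMost sum_heads_reindex[of "\<lambda>x. of_bool (block m x = j)"])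
  show ?thesis unfolding merged_degree_def block_deg_def endpoints_def using tails heads by simp
qed

lemma sum_over_blocks:
  fixes f :: "nat \<Rightarrow> real"
  assumes "\<And>x. x \<in> set (endpoints hs) \<Longrightarrow> block m x \<in> {1..n}"
  shows "(\<Sum>x\<leftarrow>endpoints hs. f (block m x)) = (\<Sum>j=1..n. block_deg m hs j * f j)"
proof -
  have "(\<Sum>x\<leftarrow>endpoints hs. f (block m x))
      = (\<Sum>x\<leftarrow>endpoints hs. \<Sum>j=1..n. of_bool (block m x = j) * f j)"
  proof (rule sum_list_cong_set)
    fix x assume "x \<in> set (endpoints hs)"
    have "(\<Sum>j=1..n. of_bool (block m x = j) * f j) = (\<Sum>j=1..n. if block m x = j then f j else 0)"
      by (rule sum.cong) auto
    with assms[OF \<open>x \<in> set (endpoints hs)\<close>]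
    show "f (block m x) = (\<Sum>j=1..n. of_bool (block m x = j) * f j)"
      by (simp add: sum.delta)
  qed
  also have "\<dots> = (\<Sum>j=1..n. block_deg m hs j * f j)"
    unfolding sum_list_sum_swap block_deg_def by (simp add: sum_list_mult_const)
  finally show ?thesis .
qed

(* Cherries: sum_j binom(D_j, 2) = (sum_j D_j^2 - sum_j D_j)/2, with sum_j D_j = 2(N - 1). *)
lemma cherries_eq_sq_deg_sum:
  assumes m: "m > 0" and n: "n \<ge> 1" and l: "length hs = n * m - 1" and valid: "valid_heads hs"
  shows "cherries m n hs = (sq_deg_sum m hs - 2 * (real (n * m) - 1)) / 2"
proof -
  have nm: "n * m \<ge> 1" using m n by simp
  have range: "block m x \<in> {1..n}" if "x \<in> set (endpoints hs)" for x
    using endpoints_range[OF valid that] l nm block_le[OF m] block_ge1 by auto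
  have squares: "sq_deg_sum m hs = (\<Sum>j=1..n. block_deg m hs j ^ 2)"
    unfolding sq_deg_sum_def power2_eq_square by (rule sum_over_blocks[OF range])
  have degrees: "(\<Sum>j=1..n. block_deg m hs j) = 2 * (real (n * m) - 1)"
    using sum_over_blocks[where f = "\<lambda>_. 1" and hs = hs and m = m and n = n, OF range] l nm
    by (simp add: length_endpoints sum_list_triv of_nat_diff)
  have choose2: "real (d choose 2) = (real d ^ 2 - real d) / 2" for d :: nat
    by (cases d) (simp_all add: choose_two real_of_nat_div field_simps power2_eq_square)
  have "cherries m n hs = (\<Sum>j=1..n. (block_deg m hs j ^ 2 - block_deg m hs j) / 2)"
    by (simp only: cherries_def of_nat_sum choose2 merged_degree_eq_block_deg[symmetric])
  also have "\<dots> = ((\<Sum>j=1..n. block_deg m hs j ^ 2) - (\<Sum>j=1..n. block_deg m hs j)) / 2"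
    by (simp only: sum_divide_distrib[symmetric] sum_subtractf)
  finally show ?thesis unfolding squares degrees .
qed

(* The one-step recursion for sq_deg_sum.  Write N for the current number of vertices,
   B = block (N + 1) for the block receiving the new vertex, D = D_B and r = N mod m. *)

(* Uniform attachment: sum_{i<=N} D_{block i} counts each endpoint y once for every vertex in
   its block, i.e. m times, except the r times for endpoints in block B. *)
lemma sum_block_deg_over_vertices:
  assumes m: "m > 0" and valid: "valid_heads hs"
  defines "N \<equiv> length hs + 1"
  shows "(\<Sum>i=1..N. block_deg m hs (block m i))
       = 2 * (real N - 1) * real m - (real m - real (N mod m)) * block_deg m hs (block m (N + 1))"
proof -
  have "(\<Sum>i=1..N. block_deg m hs (block m i))
      = (\<Sum>i=1..N. \<Sum>y\<leftarrow>endpoints hs. of_bool (block m i = block m y))"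
    unfolding block_deg_def by (intro sum.cong refl sum_list_cong_set) auto
  also have "\<dots> = (\<Sum>y\<leftarrow>endpoints hs. \<Sum>i=1..N. of_bool (block m i = block m y))"
    unfolding sum_list_sum_swap ..
  also have "\<dots> = (\<Sum>y\<leftarrow>endpoints hs. real m
      - (real m - real (N mod m)) * of_bool (block m y = block m (N + 1)))"
    using endpoints_range[OF valid] unfolding N_def
    by (intro sum_list_cong_set count_block_vertices[OF m]) auto
  also have "\<dots> = 2 * (real N - 1) * real m - (real m - real (N mod m)) * block_deg m hs (block m (N + 1))"
    unfolding block_deg_def N_def
    by (simp add: sum_list_subtractf sum_list_const_mult length_endpoints sum_list_triv)
  finally show ?thesis .
qed

lemma sum_sq_deg_sum_uniform_targets:
  assumes m: "m > 0" and valid: "valid_heads hs"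
  defines "N \<equiv> length hs + 1"
  defines "D \<equiv> block_deg m hs (block m (length hs + 2))"
  defines "r \<equiv> real (N mod m)"
  shows "(\<Sum>i=1..N. sq_deg_sum m (hs @ [i])) = real N * (sq_deg_sum m hs + 2 * D + 2)
           + 2 * (2 * (real N - 1) * real m - (real m - r) * D) + 2 * r"
proof -
  have next_block: "length hs + 2 = N + 1" unfolding N_def by simp
  have "(\<Sum>i=1..N. sq_deg_sum m (hs @ [i])) = real N * (sq_deg_sum m hs + 2 * D + 2)
      + 2 * (\<Sum>i=1..N. block_deg m hs (block m i))
      + 2 * (\<Sum>i=1..N. of_bool (block m i = block m (length hs + 2)))"
    unfolding sq_deg_sum_snoc D_def by (simp add: sum.distrib sum_distrib_left distrib_left)
  also have "(\<Sum>i=1..N. of_bool (block m i = block m (length hs + 2))) = r"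
    unfolding next_block r_def by (rule count_next_block_vertices[OF m])
  finally show ?thesis
    unfolding sum_block_deg_over_vertices[OF m valid, folded N_def] D_def next_block r_def .
qed

lemma sum_sq_deg_sum_endpoint_targets:
  fixes hs :: "nat list" and m :: nat
  defines "N \<equiv> length hs + 1"
  defines "D \<equiv> block_deg m hs (block m (length hs + 2))"
  shows "(\<Sum>x\<leftarrow>endpoints hs. sq_deg_sum m (hs @ [x]))
       = 2 * (real N - 1) * (sq_deg_sum m hs + 2 * D + 2) + 2 * sq_deg_sum m hs + 2 * D"
proof -
  have "(\<Sum>x\<leftarrow>endpoints hs. of_bool (block m x = block m (length hs + 2)) :: real) = D"
    unfolding D_def block_deg_def ..
  then show ?thesis
    unfolding sq_deg_sum_snoc sum_list_addf sum_list_const_mult sq_deg_sum_def[symmetric] D_def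
    by (simp add: length_endpoints N_def sum_list_triv algebra_simps)
qed

lemma expectation_step_sq_deg_sum:
  assumes b: "\<beta> > 0" and m: "m > 0" and valid: "valid_heads hs"
  defines "N \<equiv> length hs + 1"
  defines "Z \<equiv> total_weight \<beta> (length hs + 1)"
  defines "D \<equiv> block_deg m hs (block m (length hs + 2))"
  defines "r \<equiv> real (N mod m)"
  shows "measure_pmf.expectation (tree_step \<beta> hs) (sq_deg_sum m) =
     sq_deg_sum m hs * (1 + 2 / Z) + 2 * D + 2
       + (2 / Z) * (2 * \<beta> * real m * (real N - 1) + \<beta> * r + (1 - \<beta> * (real m - r)) * D)"
proof -
  define Q where "Q = sq_deg_sum m hs"
  define W where "W = 2 * \<beta> * real m * (real N - 1) + \<beta> * r + (1 - \<beta> * (real m - r)) * D"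
  have Z: "Z > 0" unfolding Z_def using total_weight_pos[OF b] by simp
  have ZN: "Z = \<beta> * real N + 2 * (real N - 1)"
    unfolding Z_def total_weight_def N_def by (simp add: algebra_simps)
  have key: "\<beta> * (real N * (Q + 2 * D + 2) + 2 * (2 * (real N - 1) * real m - (real m - r) * D) + 2 * r)
      + (2 * (real N - 1) * (Q + 2 * D + 2) + 2 * Q + 2 * D) = Q * Z + 2 * Q + (2 * D + 2) * Z + 2 * W"
    unfolding ZN W_def by (simp add: algebra_simps)
  have uniform: "(\<Sum>i=1..N. sq_deg_sum m (hs @ [i])) = real N * (Q + 2 * D + 2)
      + 2 * (2 * (real N - 1) * real m - (real m - r) * D) + 2 * r"
    unfolding N_def D_def r_def Q_def by (rule sum_sq_deg_sum_uniform_targets[OF m valid])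
  have endpoints: "(\<Sum>x\<leftarrow>endpoints hs. sq_deg_sum m (hs @ [x]))
      = 2 * (real N - 1) * (Q + 2 * D + 2) + 2 * Q + 2 * D"
    unfolding N_def D_def Q_def by (rule sum_sq_deg_sum_endpoint_targets)
  have "measure_pmf.expectation (tree_step \<beta> hs) (sq_deg_sum m)
      = (\<beta> * (\<Sum>i=1..N. sq_deg_sum m (hs @ [i])) + (\<Sum>x\<leftarrow>endpoints hs. sq_deg_sum m (hs @ [x]))) / Z"
    unfolding expectation_tree_step[OF b] N_def Z_def ..
  also have "\<dots> = (Q * Z + 2 * Q + (2 * D + 2) * Z + 2 * W) / Z"
    unfolding uniform endpoints key ..
  also have "\<dots> = Q * (1 + 2 / Z) + 2 * D + 2 + (2 / Z) * W"
    using Z by (simp add: field_simps)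
  finally show ?thesis unfolding Q_def W_def .
qed

definition new_block_heads :: "nat \<Rightarrow> nat list \<Rightarrow> real" where
  "new_block_heads m hs = (\<Sum>x\<leftarrow>hs. of_bool (block m x = block m (length hs + 2)))"

lemma block_deg_next_block:
  assumes m: "m > 0" and Nm: "length hs + 1 \<ge> m"
  shows "block_deg m hs (block m (length hs + 2)) = real ((length hs + 1) mod m) + new_block_heads m hs"
proof -
  define N where "N = length hs + 1"
  define B where "B = block m (N + 1)"
  have B2: "B \<ge> 2" unfolding B_def block_def using Nm m N_def
    by (simp add: Suc_le_eq div_greater_zero_iff)
  have "block m 1 = 1" unfolding block_def by simp
  moreover have "{1..N} = insert 1 {2..<length hs + 2}" unfolding N_def by auto
  ultimately have "(\<Sum>i\<in>{2..<length hs + 2}. of_bool (block m i = B) :: real)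
      = (\<Sum>i\<in>{1..N}. of_bool (block m i = B))"
    using B2 by (simp only:) (subst sum.insert; simp)
  also have "\<dots> = real (N mod m)" unfolding B_def by (rule count_next_block_vertices[OF m])
  finally have "(\<Sum>y\<leftarrow>[2..<length hs + 2]. of_bool (block m y = B) :: real) = real (N mod m)"
    by (simp only: interv_sum_list_conv_sum_set_nat set_upt)
  then show ?thesis unfolding block_deg_def new_block_heads_def endpoints_def B_def N_def by simp
qed

lemma expectation_sq_deg_sum_Suc:
  assumes b: "\<beta> > 0" and m: "m > 0" and N: "N \<ge> 1" "N \<ge> m"
  defines "X \<equiv> \<lambda>N. measure_pmf.expectation (tree_process \<beta> N) (sq_deg_sum m)"
  defines "J \<equiv> measure_pmf.expectation (tree_process \<beta> N) (new_block_heads m)"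
  defines "r \<equiv> real (N mod m)"
  defines "Z \<equiv> total_weight \<beta> N"
  shows "X (Suc N) = X N * (1 + 2 / Z) + 2 * (r + J) + 2
          + (2 / Z) * (2 * \<beta> * real m * (real N - 1) + \<beta> * r + (1 - \<beta> * (real m - r)) * (r + J))"
proof -
  define c where "c = 2 * r + 2 + (2 / Z) * (2 * \<beta> * real m * (real N - 1) + \<beta> * r
                       + (1 - \<beta> * (real m - r)) * r)"
  have "X (Suc N) = measure_pmf.expectation (tree_process \<beta> N)
      (\<lambda>hs. measure_pmf.expectation (tree_step \<beta> hs) (sq_deg_sum m))"
    unfolding X_def by (rule expectation_tree_process_Suc[OF b N(1)])
  also have "\<dots> = measure_pmf.expectation (tree_process \<beta> N) (\<lambda>hs. sq_deg_sum m hs * (1 + 2 / Z)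
      + new_block_heads m hs * (2 + (2 / Z) * (1 - \<beta> * (real m - r))) + c)"
  proof (rule expectation_cong)
    fix hs assume "hs \<in> set_pmf (tree_process \<beta> N)"
    then have "length hs + 1 = N" and valid: "valid_heads hs"
      using set_pmf_tree_process[OF b N(1)] N by auto
    then show "measure_pmf.expectation (tree_step \<beta> hs) (sq_deg_sum m) = sq_deg_sum m hs * (1 + 2 / Z)
        + new_block_heads m hs * (2 + (2 / Z) * (1 - \<beta> * (real m - r))) + c"
      using block_deg_next_block[OF m, of hs] N(2)
      unfolding expectation_step_sq_deg_sum[OF b m valid] c_def r_def Z_def
      by (simp add: algebra_simps add_divide_distrib)
  qed
  also have "\<dots> = X N * (1 + 2 / Z) + J * (2 + (2 / Z) * (1 - \<beta> * (real m - r))) + c"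
    unfolding X_def J_def by (rule expectation_linear[OF finite_tree_process[OF b N(1)]])
  finally show ?thesis unfolding c_def by (simp add: algebra_simps add_divide_distrib)
qed

(* A head lies in the block of the next vertex N + 1 only if it belongs to an
   edge e_{k+2} among the last m ones whose head is one of the m vertices just before its tail;
   each such event has probability O(m/k). *)

(* The new edge e_{k+2} gets a recent head (one of the m vertices before its tail) with
   probability at most (beta + 2) m / Z: at most m vertices, m tails and m heads qualify. *)
lemma prob_recent_head_step:
  assumes b: "\<beta> > 0" and valid: "valid_heads hs" and l: "length hs = k"
  shows "measure_pmf.expectation (tree_step \<beta> hs) (\<lambda>hs. of_bool (k + 2 \<le> hs ! k + m))
       \<le> (\<beta> + 2) * real m / total_weight \<beta> (k + 1)"
proof -
  have Z: "total_weight \<beta> (k + 1) > 0" using total_weight_pos[OF b] by simp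
  have uniform: "(\<Sum>i=1..k+1. of_bool (k + 2 \<le> i + m) :: real) \<le> real m"
  proof -
    have "(\<Sum>i=1..k+1. of_bool (k + 2 \<le> i + m) :: real) \<le> real (card {k + 2 - m .. k + 1})"
      by (rule sum_of_bool_le_card) auto
    then show ?thesis by simp
  qed
  have tails: "(\<Sum>x\<leftarrow>[2..<k+2]. of_bool (k + 2 \<le> x + m) :: real) \<le> real m"
  proof -
    have "(\<Sum>x\<leftarrow>[2..<k+2]. of_bool (k + 2 \<le> x + m) :: real) = (\<Sum>x\<in>{2..<k+2}. of_bool (k + 2 \<le> x + m))"
      by (simp only: interv_sum_list_conv_sum_set_nat set_upt)
    also have "\<dots> \<le> real (card {k + 2 - m ..< k + 2})"
      by (rule sum_of_bool_le_card) auto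
    finally show ?thesis by simp
  qed
  have heads: "(\<Sum>x\<leftarrow>hs. of_bool (k + 2 \<le> x + m) :: real) \<le> real m"
  proof -
    have "(\<Sum>x\<leftarrow>hs. of_bool (k + 2 \<le> x + m) :: real) = (\<Sum>j<k. of_bool (k + 2 \<le> hs ! j + m))"
      using l by (simp add: sum_list_sum_nth atLeast0LessThan)
    also have "\<dots> \<le> (\<Sum>j<k. of_bool (k + 2 \<le> j + 1 + m))"
    proof (rule sum_mono)
      fix j assume "j \<in> {..<k}"
      then have "hs ! j \<le> j + 1" using valid l unfolding valid_heads_def by auto
      then show "(of_bool (k + 2 \<le> hs ! j + m) :: real) \<le> of_bool (k + 2 \<le> j + 1 + m)" by auto
    qed
    also have "\<dots> \<le> real (card {k + 1 - m ..< k})"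
      by (rule sum_of_bool_le_card) auto
    finally show ?thesis by simp
  qed
  have "measure_pmf.expectation (tree_step \<beta> hs) (\<lambda>hs. of_bool (k + 2 \<le> hs ! k + m))
     = (\<beta> * (\<Sum>i=1..k+1. of_bool (k + 2 \<le> i + m)) + ((\<Sum>x\<leftarrow>[2..<k+2]. of_bool (k + 2 \<le> x + m))
         + (\<Sum>x\<leftarrow>hs. of_bool (k + 2 \<le> x + m)))) / total_weight \<beta> (k + 1)"
    unfolding expectation_tree_step[OF b] l endpoints_def by (simp add: nth_append l)
  also have "\<dots> \<le> (\<beta> * real m + (real m + real m)) / total_weight \<beta> (k + 1)"
    using uniform tails heads Z b by (intro divide_right_mono add_mono mult_left_mono) auto
  finally show ?thesis by (simp add: algebra_simps)
qed

(* By consistency of the process the same bound holds at every later time N. *)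
lemma prob_recent_head:
  assumes b: "\<beta> > 0" and kN: "k + 2 \<le> N"
  shows "measure_pmf.expectation (tree_process \<beta> N) (\<lambda>hs. of_bool (k + 2 \<le> hs ! k + m))
       \<le> (\<beta> + 2) * real m / total_weight \<beta> (k + 1)"
proof -
  have N: "(k + 2) + (N - (k + 2)) = N" using kN by simp
  have "measure_pmf.expectation (tree_process \<beta> N) (\<lambda>hs. of_bool (k + 2 \<le> hs ! k + m) :: real)
      = measure_pmf.expectation (tree_process \<beta> ((k + 2) + (N - (k + 2))))
          (\<lambda>hs. of_bool (k + 2 \<le> take (k + 2 - 1) hs ! k + m))"
    unfolding N by (rule expectation_cong) simp
  also have "\<dots> = measure_pmf.expectation (tree_process \<beta> (Suc (k + 1)))
      (\<lambda>hs. of_bool (k + 2 \<le> hs ! k + m))"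
    by (subst expectation_tree_process_prefix[OF b]) simp_all
  also have "\<dots> = measure_pmf.expectation (tree_process \<beta> (k + 1))
      (\<lambda>hs. measure_pmf.expectation (tree_step \<beta> hs) (\<lambda>h. of_bool (k + 2 \<le> h ! k + m)))"
    by (rule expectation_tree_process_Suc[OF b]) simp
  also have "\<dots> \<le> measure_pmf.expectation (tree_process \<beta> (k + 1))
      (\<lambda>_. (\<beta> + 2) * real m / total_weight \<beta> (k + 1))"
    using set_pmf_tree_process[OF b, of "k + 1"]
    by (intro expectation_mono finite_tree_process[OF b] prob_recent_head_step[OF b]) auto
  finally show ?thesis by (simp add: expectation_const)
qed

lemma new_block_heads_le:
  assumes m: "m > 0" and valid: "valid_heads hs" and l: "length hs = L"
  shows "new_block_heads m hs \<le> (\<Sum>k<L. of_bool (L + 1 \<le> k + m) * of_bool (k + 2 \<le> hs ! k + m))"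
proof -
  have "new_block_heads m hs = (\<Sum>k<L. of_bool (block m (hs ! k) = block m (L + 2)))"
    unfolding new_block_heads_def using l by (simp add: sum_list_sum_nth atLeast0LessThan)
  also have "\<dots> \<le> (\<Sum>k<L. of_bool (L + 1 \<le> k + m) * of_bool (k + 2 \<le> hs ! k + m))"
  proof (rule sum_mono)
    fix k assume k: "k \<in> {..<L}"
    have h1: "1 \<le> hs ! k" "hs ! k \<le> k + 1" using valid k l unfolding valid_heads_def by auto
    show "(of_bool (block m (hs ! k) = block m (L + 2)) :: real)
        \<le> of_bool (L + 1 \<le> k + m) * of_bool (k + 2 \<le> hs ! k + m)"
    proof (cases "block m (hs ! k) = block m (L + 2)")
      case True
      have "(block m (L + 2) - 1) * m < hs ! k"
        using block_iff[OF m h1(1) block_ge1] True by auto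
      moreover have "block m (L + 2) - 1 = (L + 1) div m" unfolding block_def by simp
      moreover have "L + 1 < (L + 1) div m * m + m" using m
        by (metis add_less_cancel_left div_mult_mod_eq mod_less_divisor)
      ultimately have "L + 1 < hs ! k + m" by simp
      then show ?thesis using True h1 k by auto
    qed auto
  qed
  finally show ?thesis .
qed

(* J_N <= (beta + 2) m^2 / N: at most m late edges, each recent with probability O(m/N). *)
lemma expectation_new_block_heads_le:
  assumes b: "\<beta> > 0" and m: "m > 0" and N: "N \<ge> 2 * m" "N \<ge> 2"
  shows "measure_pmf.expectation (tree_process \<beta> N) (new_block_heads m) \<le> (\<beta> + 2) * real m ^ 2 / real N"
proof -
  have N1: "N \<ge> 1" using N by simp
  define c where "c k = (of_bool (N - 1 + 1 \<le> k + m) :: real)" for k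
  define P where "P k = measure_pmf.expectation (tree_process \<beta> N)
                          (\<lambda>hs. of_bool (k + 2 \<le> hs ! k + m) :: real)" for k
  have late: "c k * P k \<le> c k * ((\<beta> + 2) * real m / real N)" if "k < N - 1" for k
  proof (cases "N \<le> k + m")
    case True
    have "real N \<le> 2 * real k" using True N by linarith
    also have "\<dots> \<le> total_weight \<beta> (k + 1)" using b unfolding total_weight_def by (simp add: algebra_simps)
    finally have "real N \<le> total_weight \<beta> (k + 1)" .
    then have "(\<beta> + 2) * real m / total_weight \<beta> (k + 1) \<le> (\<beta> + 2) * real m / real N"
      using b N by (intro divide_left_mono) auto
    moreover have "P k \<le> (\<beta> + 2) * real m / total_weight \<beta> (k + 1)"
      unfolding P_def using that by (intro prob_recent_head[OF b]) simp
    ultimately show ?thesis using True unfolding c_def by simp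
  qed (simp add: c_def)
  have "measure_pmf.expectation (tree_process \<beta> N) (new_block_heads m)
      \<le> measure_pmf.expectation (tree_process \<beta> N) (\<lambda>hs. \<Sum>k<N-1. c k * of_bool (k + 2 \<le> hs ! k + m))"
    using set_pmf_tree_process[OF b N1] unfolding c_def
    by (intro expectation_mono finite_tree_process[OF b N1] new_block_heads_le[OF m]) auto
  also have "\<dots> = (\<Sum>k<N-1. c k * P k)"
    unfolding P_def by (rule expectation_sum[OF finite_tree_process[OF b N1]])
  also have "\<dots> \<le> (\<Sum>k<N-1. c k) * ((\<beta> + 2) * real m / real N)"
    unfolding sum_distrib_right using late by (intro sum_mono) auto
  also have "\<dots> \<le> real m * ((\<beta> + 2) * real m / real N)"
  proof (rule mult_right_mono)
    have "(\<Sum>k<N-1. c k) \<le> real (card {N - m ..< N - 1})"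
      unfolding c_def by (rule sum_of_bool_le_card) auto
    then show "(\<Sum>k<N-1. c k) \<le> real m" by simp
  qed (use b in simp)
  finally show ?thesis by (simp add: power2_eq_square ac_simps)
qed

(* The homogeneous recursion y_{N+1} = (1 + 2/Z_N) y_N is solved by
   growth a N = (N - 1)! / (1 - a)^(N - 1 rising) = prod_{k=1}^{N-1} k/(k - a) with a = 2/(2 + beta),
   which is O(N^a) by the convergence of Gauss's product for the Gamma function. *)

definition growth :: "real \<Rightarrow> nat \<Rightarrow> real" where
  "growth a N = fact (N - 1) / pochhammer (1 - a) (N - 1)"

lemma growth_pos: "a < 1 \<Longrightarrow> growth a N > 0"
  unfolding growth_def by (intro divide_pos_pos pochhammer_pos) auto

lemma one_plus_weight_ratio:
  assumes b: "\<beta> > 0" and N: "N \<ge> 1"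
  shows "1 + 2 / total_weight \<beta> N = real N / (real N - 2 / (2 + \<beta>))"
proof -
  have Z: "total_weight \<beta> N > 0" using total_weight_pos[OF b N] .
  have nz: "2 + \<beta> \<noteq> 0" using b by simp
  have t: "(2 + \<beta>) * (2 / (2 + \<beta>)) = 2" using nz by (metis nonzero_mult_div_cancel_left times_divide_eq_right)
  have e: "total_weight \<beta> N = (2 + \<beta>) * (real N - 2 / (2 + \<beta>))" unfolding total_weight_def right_diff_distrib t ..
  have p: "real N - 2 / (2 + \<beta>) > 0" using Z b unfolding e by (simp add: zero_less_mult_iff)
  define d where "d = real N - 2 / (2 + \<beta>)"
  have d0: "d > 0" using p unfolding d_def .
  have pos: "(2 + \<beta>) * d > 0" using d0 b by simp
  have "1 + 2 / ((2 + \<beta>) * d) = ((2 + \<beta>) * d + 2) / ((2 + \<beta>) * d)"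
    using pos nz d0 by (simp add: add_divide_distrib)
  also have "(2 + \<beta>) * d + 2 = (2 + \<beta>) * real N" unfolding d_def right_diff_distrib t by simp
  also have "(2 + \<beta>) * real N / ((2 + \<beta>) * d) = real N / d" using nz by simp
  finally show ?thesis unfolding e d_def .
qed

lemma growth_Suc:
  assumes b: "\<beta> > 0" and N: "N \<ge> 1"
  shows "growth (2 / (2 + \<beta>)) (Suc N) = growth (2 / (2 + \<beta>)) N * (1 + 2 / total_weight \<beta> N)"
proof -
  define a where "a = 2 / (2 + \<beta>)"
  have a1: "a < 1" unfolding a_def using b by simp
  have Z: "total_weight \<beta> N > 0" using total_weight_pos[OF b N] .
  have p: "real N - a > 0" using one_plus_weight_ratio[OF b N] Z b a1 N unfolding a_def by linarith
  have poch: "pochhammer (1 - a) N = pochhammer (1 - a) (N - 1) * (real N - a)"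
    using N pochhammer_Suc[of "1 - a" "N - 1"] by (simp add: of_nat_diff)
  have f: "fact N = fact (N - 1) * (real N :: real)"
    using N by (metis fact_Suc Suc_pred' less_le_trans mult.commute of_nat_mult zero_less_one)
  have pp: "pochhammer (1 - a) (N - 1) > 0" using a1 by (intro pochhammer_pos) auto
  show ?thesis unfolding a_def[symmetric] one_plus_weight_ratio[OF b N, folded a_def] growth_def
    using poch f p pp by simp
qed

(* growth a N = Gamma_series'(1 - a, N) (N - a)/N^(1 - a) = O(N^a). *)
lemma growth_bound:
  assumes a0: "0 < a" and a1: "a < 1"
  shows "\<exists>C. \<forall>N\<ge>1. growth a N \<le> C * real N powr a"
proof -
  define z where "z = 1 - a"
  have z0: "z > 0" unfolding z_def using a1 by simp
  have "Bseq (Gamma_series' z)" using Gamma_series'_LIMSEQ[of z] by (intro convergent_imp_Bseq convergentI)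
  then obtain K where K: "\<forall>n. norm (Gamma_series' z n) \<le> K" by (rule BseqE)
  show ?thesis
  proof (intro exI allI impI)
    fix N :: nat assume N: "N \<ge> 1"
    have pz: "pochhammer z N = pochhammer z (N - 1) * (real N - a)"
      using N pochhammer_Suc[of z "N - 1"] unfolding z_def by (simp add: of_nat_diff)
    have pp: "pochhammer z (N - 1) > 0" using z0 by (intro pochhammer_pos) auto
    have Na: "real N - a > 0" using N a1 by simp
    have ex: "exp (z * ln (real N)) = real N powr z" using N by (simp add: powr_def)
    have G: "Gamma_series' z N = fact (N - 1) * real N powr z / pochhammer z N"
      unfolding Gamma_series'_def using ex by simp
    have "growth a N = Gamma_series' z N * (real N - a) / real N powr z"
      unfolding growth_def G z_def[symmetric] pz using Na pp N by (simp add: field_simps)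
    also have "\<dots> \<le> K * real N / real N powr z"
    proof (intro divide_right_mono mult_mono)
      show "Gamma_series' z N \<le> K" using K[rule_format, of N] by simp
      show "real N - a \<le> real N" using a0 by simp
      show "0 \<le> K" using K[rule_format, of N] by (meson norm_ge_zero order.trans)
      show "0 \<le> real N - a" using Na by simp
    qed simp
    also have "K * real N / real N powr z = K * real N powr a"
    proof -
      have "real N = real N powr z * real N powr a" using N unfolding z_def
        by (simp add: powr_add[symmetric])
      then show ?thesis using N by (simp add: field_simps)
    qed
    finally show "growth a N \<le> K * real N powr a" .
  qed
qed

(* One step of the discrete Groenwall argument: the bound A growth(N) - K/a propagates,
   because 2/Z_N >= a/N lets the margin K/a absorb the perturbation K/N. *)
lemma growth_bound_step:
  assumes b: "\<beta> > 0" and n: "n \<ge> 1" and K: "K \<ge> 0"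
  defines "a \<equiv> 2 / (2 + \<beta>)"
  assumes rec: "\<bar>y' - (1 + 2 / total_weight \<beta> n) * y\<bar> \<le> K / real n"
    and y: "\<bar>y\<bar> \<le> A * growth a n - K / a"
  shows "\<bar>y'\<bar> \<le> A * growth a (Suc n) - K / a"
proof -
  have Z: "total_weight \<beta> n > 0" using total_weight_pos[OF b n] .
  have c0: "1 + 2 / total_weight \<beta> n \<ge> 0" using Z by simp
  have "\<bar>y'\<bar> \<le> \<bar>y' - (1 + 2 / total_weight \<beta> n) * y\<bar> + (1 + 2 / total_weight \<beta> n) * \<bar>y\<bar>"
    using abs_triangle_ineq[of "y' - (1 + 2 / total_weight \<beta> n) * y" "(1 + 2 / total_weight \<beta> n) * y"] c0
    by (simp add: abs_mult)
  also have "\<dots> \<le> K / real n + (1 + 2 / total_weight \<beta> n) * (A * growth a n - K / a)"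
    using rec y c0 by (intro add_mono mult_left_mono)
  also have "\<dots> = A * growth a (Suc n) - K / a - (2 * (K / a) / total_weight \<beta> n - K / real n)"
    unfolding growth_Suc[OF b n, folded a_def] by (simp add: algebra_simps)
  also have "\<dots> \<le> A * growth a (Suc n) - K / a"
  proof -
    have "a * total_weight \<beta> n \<le> 2 * real n" unfolding a_def total_weight_def using b by (simp add: field_simps)
    then have "K * (a * total_weight \<beta> n) \<le> K * (2 * real n)" using K by (rule mult_left_mono)
    then have "K / real n \<le> 2 * (K / a) / total_weight \<beta> n"
      using Z b n unfolding a_def by (simp add: field_simps)
    then show ?thesis by simp
  qed
  finally show ?thesis .
qed

lemma perturbed_recursion_bound:
  fixes Y :: "nat \<Rightarrow> real"
  assumes b: "\<beta> > 0" and N0: "N0 \<ge> 1" and K: "K \<ge> 0"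
    and rec: "\<And>N. N \<ge> N0 \<Longrightarrow> \<bar>Y (Suc N) - (1 + 2 / total_weight \<beta> N) * Y N\<bar> \<le> K / real N"
  shows "\<exists>A. \<forall>N\<ge>N0. \<bar>Y N\<bar> \<le> A * growth (2 / (2 + \<beta>)) N"
proof -
  define a where "a = 2 / (2 + \<beta>)"
  have a: "a > 0" "a < 1" unfolding a_def using b by auto
  define A where "A = (\<bar>Y N0\<bar> + K / a) / growth a N0"
  have main: "\<bar>Y N\<bar> \<le> A * growth a N - K / a" if "N \<ge> N0" for N
    using that
  proof (induction N rule: dec_induct)
    case base
    then show ?case unfolding A_def using growth_pos[OF a(2), of N0] by simp
  next
    case (step n)
    then show ?case
      unfolding a_def using growth_bound_step[OF b _ K rec] N0 by (simp add: a_def)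
  qed
  have "K / a \<ge> 0" using K a by simp
  then show ?thesis unfolding a_def[symmetric] using main by (intro exI[of _ A]) force
qed

(* E sq_deg_sum grows like alpha N, up to a periodic correction r^2 - m r with
   r = N mod m that accounts for the partially filled last block; what remains is the defect,
   which obeys the homogeneous recursion up to O(1/N). *)

definition sq_deg_rate :: "real \<Rightarrow> nat \<Rightarrow> real" where
  "sq_deg_rate \<beta> m = ((2 + \<beta>) * (real m + 1) + 4 * \<beta> * real m) / \<beta>"

definition defect :: "real \<Rightarrow> nat \<Rightarrow> nat \<Rightarrow> real" where
  "defect \<beta> m N = measure_pmf.expectation (tree_process \<beta> N) (sq_deg_sum m)
     - sq_deg_rate \<beta> m * real N - (real (N mod m) ^ 2 - real m * real (N mod m))"

lemma mod_correction_Suc: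
  assumes "m > 0"
  shows "real (Suc N mod m) ^ 2 - real m * real (Suc N mod m)
       = (real (N mod m) + 1) ^ 2 - real m * (real (N mod m) + 1)"
proof (cases "Suc (N mod m) = m")
  case True
  then have "Suc N mod m = 0" by (simp add: mod_Suc)
  moreover have "real (N mod m) + 1 = real m" using True by (metis of_nat_Suc add.commute)
  ultimately show ?thesis by (simp add: power2_eq_square)
next
  case False
  then have "Suc N mod m = Suc (N mod m)" by (simp add: mod_Suc)
  then show ?thesis by (simp add: add.commute)
qed

(* Substituting the recursion for X into the defect: the linear growth cancels because of the
   choice of alpha, leaving a J-term and a bounded term, both divided by Z or O(1/N). *)
lemma defect_step_identity:
  fixes X X1 J r Z \<alpha> \<beta> m N :: real
  assumes Z: "Z = (2 + \<beta>) * N - 2" "Z \<noteq> 0" and \<alpha>: "\<alpha> * \<beta> = (2 + \<beta>) * (m + 1) + 4 * \<beta> * m"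
    and X1: "X1 = X * (1 + 2 / Z) + 2 * (r + J) + 2
                + (2 / Z) * (2 * \<beta> * m * (N - 1) + \<beta> * r + (1 - \<beta> * (m - r)) * (r + J))"
  shows "(X1 - \<alpha> * (N + 1) - ((r + 1) ^ 2 - m * (r + 1))) - (1 + 2 / Z) * (X - \<alpha> * N - (r ^ 2 - m * r))
       = J * (2 + 2 * (1 - \<beta> * (m - r)) / Z)
         + (2 * \<alpha> - 2 * m - 2 - 4 * \<beta> * m + 2 * (\<beta> * r + (1 - \<beta> * (m - r)) * r + (r ^ 2 - m * r))) / Z"
proof -
  have "((m + 1) - \<alpha>) * Z + 4 * \<beta> * m * (N - 1) + 2 * \<alpha> * N
      = N * ((2 + \<beta>) * (m + 1) + 4 * \<beta> * m - \<alpha> * \<beta>) + 2 * \<alpha> - 2 * m - 2 - 4 * \<beta> * m"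
    unfolding Z(1) by (simp add: algebra_simps)
  then have cancel: "((m + 1) - \<alpha>) * Z + 4 * \<beta> * m * (N - 1) + 2 * \<alpha> * N = 2 * \<alpha> - 2 * m - 2 - 4 * \<beta> * m"
    using \<alpha> by simp
  have "(X1 - \<alpha> * (N + 1) - ((r + 1) ^ 2 - m * (r + 1))) - (1 + 2 / Z) * (X - \<alpha> * N - (r ^ 2 - m * r))
      = J * (2 + 2 * (1 - \<beta> * (m - r)) / Z) + (((m + 1) - \<alpha>) * Z + 4 * \<beta> * m * (N - 1) + 2 * \<alpha> * N
          + 2 * (\<beta> * r + (1 - \<beta> * (m - r)) * r + (r ^ 2 - m * r))) / Z"
    unfolding X1 using Z(2) by (simp add: field_simps power2_eq_square)
  then show ?thesis unfolding cancel .
qed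

lemma J_term_bound:
  fixes J Z \<beta> r m N :: real
  assumes b: "\<beta> > 0" and r: "0 \<le> r" "r \<le> m" and Z: "Z \<ge> N" "N \<ge> 1"
    and J: "0 \<le> J" "J \<le> (\<beta> + 2) * m ^ 2 / N"
  shows "\<bar>J * (2 + 2 * (1 - \<beta> * (m - r)) / Z)\<bar> \<le> (4 + 2 * \<beta> * m) * ((\<beta> + 2) * m ^ 2) / N"
proof -
  have Z0: "Z > 0" and Z1: "Z \<ge> 1" using Z by linarith+
  have "0 \<le> \<beta> * (m - r)" "\<beta> * (m - r) \<le> \<beta> * m" using b r by (auto intro: mult_left_mono)
  then have c: "\<bar>1 - \<beta> * (m - r)\<bar> \<le> 1 + \<beta> * m" by (simp add: abs_le_iff)
  have "\<bar>2 * (1 - \<beta> * (m - r)) / Z\<bar> = 2 * \<bar>1 - \<beta> * (m - r)\<bar> / Z"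
    unfolding abs_divide abs_mult using Z0 by simp
  also have "\<dots> \<le> 2 * \<bar>1 - \<beta> * (m - r)\<bar>"
    using Z1 Z0 by (simp add: divide_le_eq) (metis abs_ge_zero mult.right_neutral mult_left_mono)
  also have "\<dots> \<le> 2 * (1 + \<beta> * m)" using c by simp
  finally have "\<bar>2 + 2 * (1 - \<beta> * (m - r)) / Z\<bar> \<le> 4 + 2 * \<beta> * m"
    using abs_triangle_ineq[of 2 "2 * (1 - \<beta> * (m - r)) / Z"] by simp
  then have "\<bar>J * (2 + 2 * (1 - \<beta> * (m - r)) / Z)\<bar> \<le> J * (4 + 2 * \<beta> * m)"
    using J by (simp add: abs_mult mult_left_mono)
  also have "\<dots> \<le> (\<beta> + 2) * m ^ 2 / N * (4 + 2 * \<beta> * m)"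
    using J b r by (intro mult_right_mono) auto
  finally show ?thesis by (simp add: field_simps)
qed

lemma bounded_term_bound:
  fixes \<beta> \<alpha> r m :: real
  assumes b: "\<beta> > 0" and r: "0 \<le> r" "r \<le> m" and \<alpha>: "\<alpha> \<ge> 0"
  shows "\<bar>2 * \<alpha> - 2 * m - 2 - 4 * \<beta> * m + 2 * (\<beta> * r + (1 - \<beta> * (m - r)) * r + (r ^ 2 - m * r))\<bar>
     \<le> 2 * \<alpha> + 2 * m + 2 + 4 * \<beta> * m + 2 * (\<beta> * m + m + \<beta> * m * m + m * m)"
proof -
  define s where "s = (m - r) * r"
  have s: "0 \<le> s" "s \<le> m * m" unfolding s_def using r by (auto intro: mult_mono)
  have "0 \<le> \<beta> * r" "\<beta> * r \<le> \<beta> * m" "0 \<le> \<beta> * s" "\<beta> * s \<le> \<beta> * (m * m)"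
    using b r s by (auto intro: mult_left_mono)
  moreover have "(1 - \<beta> * (m - r)) * r = r - \<beta> * s" "r ^ 2 - m * r = - s"
    unfolding s_def by (simp_all add: algebra_simps power2_eq_square)
  moreover have "\<bar>2 * \<alpha> - 2 * m - 2 - 4 * bm + 2 * (u + (r - v) - s)\<bar>
      \<le> 2 * \<alpha> + 2 * m + 2 + 4 * bm + 2 * (bm + m + bmm + m * m)"
    if "0 \<le> u" "u \<le> bm" "0 \<le> v" "v \<le> bmm" for u v bm bmm :: real
    using that r s \<alpha> by (simp add: abs_le_iff)
  ultimately show ?thesis by (simp add: mult.assoc)
qed

definition increment_const :: "real \<Rightarrow> real \<Rightarrow> real \<Rightarrow> real" where
  "increment_const \<beta> \<alpha> m = (2 * \<alpha> + 2 * m + 2 + 4 * \<beta> * m + 2 * (\<beta> * m + m + \<beta> * m * m + m * m))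
     + (4 + 2 * \<beta> * m) * ((\<beta> + 2) * m ^ 2)"

lemma increment_bound:
  fixes J Z \<beta> r m N \<alpha> :: real
  assumes b: "\<beta> > 0" and r: "0 \<le> r" "r \<le> m" and Z: "Z \<ge> N" "N \<ge> 1" and \<alpha>: "\<alpha> \<ge> 0"
    and J: "0 \<le> J" "J \<le> (\<beta> + 2) * m ^ 2 / N"
  shows "\<bar>J * (2 + 2 * (1 - \<beta> * (m - r)) / Z) + (2 * \<alpha> - 2 * m - 2 - 4 * \<beta> * m
            + 2 * (\<beta> * r + (1 - \<beta> * (m - r)) * r + (r ^ 2 - m * r))) / Z\<bar>
       \<le> increment_const \<beta> \<alpha> m / N"
proof -
  define E where "E = 2 * \<alpha> - 2 * m - 2 - 4 * \<beta> * m + 2 * (\<beta> * r + (1 - \<beta> * (m - r)) * r + (r ^ 2 - m * r))"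
  define C where "C = 2 * \<alpha> + 2 * m + 2 + 4 * \<beta> * m + 2 * (\<beta> * m + m + \<beta> * m * m + m * m)"
  have "\<bar>E\<bar> \<le> C" unfolding E_def C_def by (rule bounded_term_bound[OF b r \<alpha>])
  then have "\<bar>E / Z\<bar> \<le> C / Z" using Z by (simp add: divide_right_mono)
  also have "\<dots> \<le> C / N" using \<open>\<bar>E\<bar> \<le> C\<close> Z by (intro divide_left_mono) auto
  finally have "\<bar>E / Z\<bar> \<le> C / N" .
  with J_term_bound[OF b r Z J]
  have "\<bar>J * (2 + 2 * (1 - \<beta> * (m - r)) / Z) + E / Z\<bar> \<le> (4 + 2 * \<beta> * m) * ((\<beta> + 2) * m ^ 2) / N + C / N"
    by (rule order.trans[OF abs_triangle_ineq add_mono])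
  then show ?thesis unfolding E_def[symmetric] increment_const_def C_def[symmetric]
    by (simp add: add_divide_distrib add.commute)
qed

lemma defect_recursion:
  assumes b: "\<beta> > 0" and m: "m > 0" and N: "N \<ge> 2 * m" "N \<ge> 2"
  shows "\<bar>defect \<beta> m (Suc N) - (1 + 2 / total_weight \<beta> N) * defect \<beta> m N\<bar>
       \<le> increment_const \<beta> (sq_deg_rate \<beta> m) (real m) / real N"
proof -
  define \<alpha> where "\<alpha> = sq_deg_rate \<beta> m"
  define r where "r = real (N mod m)"
  define Z where "Z = total_weight \<beta> N"
  define X where "X = (\<lambda>N. measure_pmf.expectation (tree_process \<beta> N) (sq_deg_sum m))"
  define J where "J = measure_pmf.expectation (tree_process \<beta> N) (new_block_heads m)"
  have N1: "N \<ge> 1" "N \<ge> m" using N m by auto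
  have Z0: "Z > 0" unfolding Z_def using total_weight_pos[OF b N1(1)] .
  have "\<beta> * real N \<ge> 0" using b by simp
  then have ZN: "Z \<ge> real N" using N unfolding Z_def total_weight_def by (simp add: algebra_simps)
  have r: "0 \<le> r" "r \<le> real m" unfolding r_def using m by (auto intro: less_imp_le)
  have J: "0 \<le> J" "J \<le> (\<beta> + 2) * real m ^ 2 / real N"
    unfolding J_def using expectation_new_block_heads_le[OF b m N]
    by (auto intro!: expectation_nonneg sum_list_nonneg simp: new_block_heads_def)
  have \<alpha>: "\<alpha> * \<beta> = (2 + \<beta>) * (real m + 1) + 4 * \<beta> * real m" "\<alpha> \<ge> 0"
    unfolding \<alpha>_def sq_deg_rate_def using b by simp_all
  have Xr: "X (Suc N) = X N * (1 + 2 / Z) + 2 * (r + J) + 2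
          + (2 / Z) * (2 * \<beta> * real m * (real N - 1) + \<beta> * r + (1 - \<beta> * (real m - r)) * (r + J))"
    unfolding X_def Z_def r_def J_def by (rule expectation_sq_deg_sum_Suc[OF b m N1])
  have "defect \<beta> m (Suc N) = X (Suc N) - \<alpha> * (real N + 1) - ((r + 1) ^ 2 - real m * (r + 1))"
    unfolding defect_def X_def \<alpha>_def mod_correction_Suc[OF m] r_def by simp
  moreover have "defect \<beta> m N = X N - \<alpha> * real N - (r ^ 2 - real m * r)"
    unfolding defect_def X_def \<alpha>_def r_def by simp
  moreover have "Z = (2 + \<beta>) * real N - 2" unfolding Z_def total_weight_def ..
  ultimately have "defect \<beta> m (Suc N) - (1 + 2 / Z) * defect \<beta> m N
      = J * (2 + 2 * (1 - \<beta> * (real m - r)) / Z) + (2 * \<alpha> - 2 * real m - 2 - 4 * \<beta> * real m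
          + 2 * (\<beta> * r + (1 - \<beta> * (real m - r)) * r + (r ^ 2 - real m * r))) / Z"
    using defect_step_identity[OF _ _ \<alpha>(1) Xr] Z0 by simp
  also have "\<bar>\<dots>\<bar> \<le> increment_const \<beta> \<alpha> (real m) / real N"
    using N by (intro increment_bound[OF b r ZN _ \<alpha>(2) J]) simp
  finally show ?thesis unfolding Z_def \<alpha>_def .
qed

lemma defect_bound:
  assumes b: "\<beta> > 0" and m: "m > 0"
  shows "\<exists>C. \<forall>N \<ge> 2 * m + 2. \<bar>defect \<beta> m N\<bar> \<le> C * real N powr (2 / (2 + \<beta>))"
proof -
  define a where "a = 2 / (2 + \<beta>)"
  have a: "0 < a" "a < 1" unfolding a_def using b by auto
  define K where "K = increment_const \<beta> (sq_deg_rate \<beta> m) (real m)"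
  have "sq_deg_rate \<beta> m \<ge> 0" unfolding sq_deg_rate_def using b by simp
  then have K0: "K \<ge> 0" unfolding K_def increment_const_def using b by simp
  have "\<bar>defect \<beta> m (Suc N) - (1 + 2 / total_weight \<beta> N) * defect \<beta> m N\<bar> \<le> K / real N"
    if "N \<ge> 2 * m + 2" for N
    unfolding K_def using that by (intro defect_recursion[OF b m]) auto
  then have "\<exists>A. \<forall>N \<ge> 2 * m + 2. \<bar>defect \<beta> m N\<bar> \<le> A * growth a N"
    unfolding a_def by (intro perturbed_recursion_bound[OF b _ K0]) auto
  then obtain A where A: "\<And>N. N \<ge> 2 * m + 2 \<Longrightarrow> \<bar>defect \<beta> m N\<bar> \<le> A * growth a N"
    by blast
  obtain C where C: "\<And>N. N \<ge> 1 \<Longrightarrow> growth a N \<le> C * real N powr a"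
    using growth_bound[OF a] by blast
  have "A \<ge> 0"
  proof (rule ccontr)
    assume "\<not> A \<ge> 0"
    then have "A * growth a (2 * m + 2) < 0" using growth_pos[OF a(2)] by (simp add: mult_neg_pos)
    then show False using A[of "2 * m + 2"] by simp
  qed
  then have "\<bar>defect \<beta> m N\<bar> \<le> (A * C) * real N powr a" if "N \<ge> 2 * m + 2" for N
    using A[OF that] C[of N] that mult_left_mono[of "growth a N" "C * real N powr a" A]
    by (simp add: mult.assoc)
  then show ?thesis unfolding a_def by blast
qed

lemma expectation_cherries:
  assumes b: "\<beta> > 0" and m: "m > 0" and n: "n \<ge> 1"
  shows "measure_pmf.expectation (tree_process \<beta> (n * m)) (cherries m n)
       = (measure_pmf.expectation (tree_process \<beta> (n * m)) (sq_deg_sum m) - 2 * (real (n * m) - 1)) / 2"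
proof -
  have nm: "n * m \<ge> 1" using n m by simp
  have "measure_pmf.expectation (tree_process \<beta> (n * m)) (cherries m n)
      = measure_pmf.expectation (tree_process \<beta> (n * m))
          (\<lambda>hs. sq_deg_sum m hs * (1/2) + sq_deg_sum m hs * 0 + (- (real (n * m) - 1)))"
  proof (rule expectation_cong)
    fix hs assume "hs \<in> set_pmf (tree_process \<beta> (n * m))"
    then have "length hs = n * m - 1" "valid_heads hs" using set_pmf_tree_process[OF b nm] by auto
    then show "cherries m n hs = sq_deg_sum m hs * (1/2) + sq_deg_sum m hs * 0 + (- (real (n * m) - 1))"
      using cherries_eq_sq_deg_sum[OF m n] by (simp add: field_simps)
  qed
  also have "\<dots> = measure_pmf.expectation (tree_process \<beta> (n * m)) (sq_deg_sum m) * (1/2)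
      + measure_pmf.expectation (tree_process \<beta> (n * m)) (sq_deg_sum m) * 0 + (- (real (n * m) - 1))"
    by (rule expectation_linear[OF finite_tree_process[OF b nm]])
  finally show ?thesis by simp
qed

(* E[cherries] exceeds the claimed linear term by exactly (defect(nm) + 2)/2; the
   coefficient is (alpha - 2) m / 2. *)
lemma expectation_cherries_minus_linear:
  assumes b: "\<beta> > 0" and m: "m > 0" and n: "n \<ge> 1"
  shows "measure_pmf.expectation (tree_process \<beta> (n * m)) (cherries m n)
           - ((2 + 5 * \<beta>) / (2 * \<beta>) * real m ^ 2 + (2 - \<beta>) / (2 * \<beta>) * real m) * real n
       = (defect \<beta> m (n * m) + 2) / 2"
  unfolding expectation_cherries[OF b m n] defect_def sq_deg_rate_def using b
  by (simp add: field_simps power2_eq_square)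

lemma defect_subsequence_bound:
  assumes b: "\<beta> > 0" and m: "m > 0"
  defines "a \<equiv> 2 / (2 + \<beta>)"
  shows "\<exists>K. \<forall>n \<ge> 2 * m + 2. \<bar>(defect \<beta> m (n * m) + 2) / 2\<bar> \<le> K * real n powr a"
proof -
  obtain C where C: "\<And>N. N \<ge> 2 * m + 2 \<Longrightarrow> \<bar>defect \<beta> m N\<bar> \<le> C * real N powr a"
    using defect_bound[OF b m] unfolding a_def by blast
  have "\<bar>(defect \<beta> m (n * m) + 2) / 2\<bar> \<le> (1 + \<bar>C\<bar> * real m powr a / 2) * real n powr a"
    if n: "n \<ge> 2 * m + 2" for n
  proof -
    have "n \<le> n * m" using m by simp
    then have "n * m \<ge> 2 * m + 2" using n by linarith
    then have "\<bar>defect \<beta> m (n * m)\<bar> \<le> C * real (n * m) powr a" by (rule C)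
    also have "\<dots> \<le> \<bar>C\<bar> * real m powr a * real n powr a"
      by (simp add: powr_mult mult_right_mono mult.commute mult.left_commute)
    finally have "\<bar>defect \<beta> m (n * m)\<bar> \<le> \<bar>C\<bar> * real m powr a * real n powr a" .
    moreover have "real n powr a \<ge> 1" using n b unfolding a_def by (simp add: ge_one_powr_ge_zero)
    ultimately show ?thesis by (simp add: algebra_simps)
  qed
  then show ?thesis by blast
qed

theorem proposition4:
  fixes \<beta> :: real and m :: nat
  assumes "\<beta> > 0" and "m > 0"
  shows "(\<lambda>n::nat. measure_pmf.expectation (tree_process \<beta> (n * m)) (cherries m n)
            - ((2 + 5 * \<beta>) / (2 * \<beta>) * real m ^ 2 + (2 - \<beta>) / (2 * \<beta>) * real m) * real n)
         \<in> O(\<lambda>n. real n powr (2 / (2 + \<beta>)))"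
proof -
  obtain K where K: "\<And>n. n \<ge> 2 * m + 2
      \<Longrightarrow> \<bar>(defect \<beta> m (n * m) + 2) / 2\<bar> \<le> K * real n powr (2 / (2 + \<beta>))"
    using defect_subsequence_bound[OF assms] by blast
  show ?thesis
  proof (intro bigoI[where c = K] eventually_at_top_linorderI)
    fix n :: nat assume n: "n \<ge> 2 * m + 2"
    then have "n \<ge> 1" by simp
    show "norm (measure_pmf.expectation (tree_process \<beta> (n * m)) (cherries m n)
        - ((2 + 5 * \<beta>) / (2 * \<beta>) * real m ^ 2 + (2 - \<beta>) / (2 * \<beta>) * real m) * real n)
        \<le> K * norm (real n powr (2 / (2 + \<beta>)))"
      unfolding real_norm_def expectation_cherries_minus_linear[OF assms \<open>n \<ge> 1\<close>]
      using K[OF n] by simp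
  qed
qed

end
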